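(* Let $G$ and $N$ be finite groups of the same order, let $\mathfrak{f}:G\to\mathrm{Aut}(N)$ be a homomorphism and let $\mathfrak{g}:G\to N$ be a bijective map such that $\mathfrak{g}(\sigma\tau)=\mathfrak{g}(\sigma)\cdot\mathfrak{f}(\sigma)(\mathfrak{g}(\tau))$ for all $\sigma,\tau\in G$. Let $\pi:\mathrm{Aut}(N)\to\mathrm{Out}(N)=\mathrm{Aut}(N)/\mathrm{Inn}(N)$ be the natural quotient map. If $G$ is insolvable and $N$ is solvable, then $(\pi\circ\mathfrak{f})(G)$ is an insolvable subgroup of $\mathrm{Out}(N)$.
   Context: $\mathrm{Inn}(N)$ and $\mathrm{Out}(N)$ denote the inner and outer automorphism groups of $N$. *)

theory Defs
  imports "HOL-Algebra.Algebra"
begin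

definition Inn :: "('a, 'b) monoid_scheme \<Rightarrow> ('a \<Rightarrow> 'a) set" where
  "Inn N = (\<lambda>n. \<lambda>x \<in> carrier N. n \<otimes>\<^bsub>N\<^esub> x \<otimes>\<^bsub>N\<^esub> inv\<^bsub>N\<^esub> n) ` carrier N"

definition Out :: "('a, 'b) monoid_scheme \<Rightarrow> ('a \<Rightarrow> 'a) set monoid" where
  "Out N = AutoGroup N Mod Inn N"

definition out_proj :: "('a, 'b) monoid_scheme \<Rightarrow> ('a \<Rightarrow> 'a) \<Rightarrow> ('a \<Rightarrow> 'a) set" where
  "out_proj N a = Inn N #>\<^bsub>AutoGroup N\<^esub> a"

end

theory Submission
  imports Defs
begin

text \<open>
  Let \<open>K\<close> be the kernel of \<open>\<pi> \<circ> f\<close>, i.e. the preimage of \<open>Inn(N)\<close> under \<open>f\<close>.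
  On \<open>ker f\<close> the twisted identity for \<open>g\<close> becomes \<open>g(\<sigma>\<tau>) = g(\<sigma>) g(\<tau>)\<close>, so \<open>g\<close> embeds
  \<open>ker f\<close> into the solvable group \<open>N\<close>; and \<open>f\<close> maps \<open>K\<close> into \<open>Inn(N)\<close>, a homomorphic
  image of \<open>N\<close>. Hence \<open>K\<close> is solvable, and a solvable image \<open>(\<pi> \<circ> f)(G) \<cong> G/K\<close> would make
  \<open>G\<close> solvable.
\<close>

lemma (in group) solvable_seq_iff_solvable:
  assumes "subgroup H G"
  shows "solvable_seq G H \<longleftrightarrow> solvable (G\<lparr>carrier := H\<rparr>)"
proof -
  interpret i: group_hom "G\<lparr>carrier := H\<rparr>" G id
    using subgroup.subgroup_is_group[OF assms is_group] assms
    by (auto simp: group_hom_def group_hom_axioms_def hom_def is_group dest: subgroup.mem_carrier)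
  show ?thesis
    using i.solvable_imp_solvable_img[of H] i.solvable_img_imp_solvable[of H] i.G.subgroup_self
    unfolding solvable_def by auto
qed

lemma (in group) solvable_seq_subgroup_mono:
  assumes "solvable_seq G S" and "subgroup T G" and "T \<subseteq> S"
  shows "solvable_seq G T"
proof -
  obtain n where n: "(derived G ^^ n) S = {\<one>}"
    using solvable_imp_trivial_derived_seq[OF assms(1)] by blast
  have "(derived G ^^ n) T = {\<one>}"
    using mono_exp_of_derived[OF assms(3), of n] n
          subgroup.one_closed[OF exp_of_derived_is_subgroup[OF assms(2)], of n]
    by auto
  then show ?thesis
    using trivial_derived_seq_imp_solvable[OF assms(2)] by blast
qed

lemma (in group_hom) subgroup_vimage:
  assumes "subgroup S H"
  shows "subgroup {x \<in> carrier G. h x \<in> S} G"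
  using assms
  by (auto intro!: subgroup.intro simp: subgroup.one_closed subgroup.m_closed subgroup.m_inv_closed)

lemma (in group_hom) solvable_seq_vimage:
  assumes "solvable_seq G (kernel G H h)" and "solvable_seq H S"
  shows "solvable_seq G {x \<in> carrier G. h x \<in> S}"
proof -
  have S: "subgroup S H"
    using H.solvable_imp_subgroup[OF assms(2)] .
  have J: "subgroup {x \<in> carrier G. h x \<in> S} G"
    using subgroup_vimage[OF S] .
  have "solvable_seq H (h ` {x \<in> carrier G. h x \<in> S})"
    using H.solvable_seq_subgroup_mono[OF assms(2) subgroup_img_is_subgroup[OF J]] by blast
  moreover have "group_hom G G id"
    by (simp add: group_hom_def group_hom_axioms_def G.is_group hom_def)
  moreover have "kernel G H h \<subseteq> {x \<in> carrier G. h x \<in> S}"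
    using subgroup.one_closed[OF S] by (auto simp: kernel_def)
  ultimately show ?thesis
    using solvable_seq_condition[OF _ group_hom_axioms _ _ J assms(1)] by auto
qed

definition inner_aut :: "('a, 'b) monoid_scheme \<Rightarrow> 'a \<Rightarrow> ('a \<Rightarrow> 'a)" where
  "inner_aut G n = (\<lambda>x \<in> carrier G. n \<otimes>\<^bsub>G\<^esub> x \<otimes>\<^bsub>G\<^esub> inv\<^bsub>G\<^esub> n)"

lemma Inn_eq_image_inner_aut: "Inn G = inner_aut G ` carrier G"
  unfolding Inn_def inner_aut_def ..

lemma (in group) inner_aut_in_auto:
  assumes n: "n \<in> carrier G"
  shows "inner_aut G n \<in> auto G"
proof -
  have "n \<otimes> (x \<otimes> y) \<otimes> inv n = n \<otimes> x \<otimes> inv n \<otimes> (n \<otimes> y \<otimes> inv n)"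
    if "x \<in> carrier G" "y \<in> carrier G" for x y
    using n that by (simp add: m_assoc) (metis inv_closed inv_solve_left' m_assoc m_closed)
  then have "inner_aut G n \<in> hom G G"
    using n by (auto intro!: homI simp: inner_aut_def)
  moreover have "inner_aut G n \<in> Bij (carrier G)"
    using conjugation_is_bij[OF n] by (simp add: Bij_def inner_aut_def)
  ultimately show ?thesis
    unfolding auto_def by blast
qed

lemma (in group) inner_aut_hom: "inner_aut G \<in> hom G (AutoGroup G)"
  using conjugation_is_hom inner_aut_in_auto
  unfolding hom_def AutoGroup_def inner_aut_def[abs_def] by simp

lemma (in group) AutoGroup_mult_eq_compose:
  "a \<in> auto G \<Longrightarrow> b \<in> auto G \<Longrightarrow> a \<otimes>\<^bsub>AutoGroup G\<^esub> b = compose (carrier G) a b"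
  by (simp add: AutoGroup_def BijGroup_def auto_def)

lemma (in group) AutoGroup_conj_inner_aut:
  assumes a: "a \<in> carrier (AutoGroup G)" and n: "n \<in> carrier G"
  shows "a \<otimes>\<^bsub>AutoGroup G\<^esub> inner_aut G n \<otimes>\<^bsub>AutoGroup G\<^esub> inv\<^bsub>AutoGroup G\<^esub> a
         = inner_aut G (a n)"
proof -
  interpret A: group "AutoGroup G" by (rule AutoGroup)
  have a_auto: "a \<in> auto G" using a by (simp add: AutoGroup_def)
  interpret a: group_hom G G a
    using a_auto by (simp add: group_hom_def group_hom_axioms_def auto_def is_group)
  have an: "a n \<in> carrier G" using n by simp
  have "compose (carrier G) a (inner_aut G n) = compose (carrier G) (inner_aut G (a n)) a"
    using a_auto n by (auto simp: compose_def inner_aut_def auto_def Bij_def bij_betw_def)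
  then have "a \<otimes>\<^bsub>AutoGroup G\<^esub> inner_aut G n = inner_aut G (a n) \<otimes>\<^bsub>AutoGroup G\<^esub> a"
    using a_auto n an by (simp add: AutoGroup_mult_eq_compose inner_aut_in_auto)
  moreover have "inner_aut G (a n) \<in> carrier (AutoGroup G)"
    using an by (simp add: AutoGroup_def inner_aut_in_auto)
  ultimately show ?thesis
    using a by (simp add: A.m_assoc)
qed

lemma (in group) Inn_normal: "Inn G \<lhd> AutoGroup G"
proof -
  interpret A: group "AutoGroup G" by (rule AutoGroup)
  interpret c: group_hom G "AutoGroup G" "inner_aut G"
    by (simp add: group_hom_def group_hom_axioms_def inner_aut_hom AutoGroup is_group)
  show ?thesis
    unfolding A.normal_inv_iff Inn_eq_image_inner_aut
  proof (intro conjI ballI c.img_is_subgroup)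
    fix a h assume a: "a \<in> carrier (AutoGroup G)" and "h \<in> inner_aut G ` carrier G"
    then obtain n where n: "n \<in> carrier G" and h: "h = inner_aut G n" by blast
    have "a n \<in> carrier G" using a n by (auto simp: AutoGroup_def auto_def hom_def)
    then show "a \<otimes>\<^bsub>AutoGroup G\<^esub> h \<otimes>\<^bsub>AutoGroup G\<^esub> inv\<^bsub>AutoGroup G\<^esub> a
               \<in> inner_aut G ` carrier G"
      using a n h AutoGroup_conj_inner_aut by simp
  qed
qed

lemma (in group) solvable_seq_Inn:
  assumes "solvable G"
  shows "solvable_seq (AutoGroup G) (Inn G)"
proof -
  interpret c: group_hom G "AutoGroup G" "inner_aut G"
    by (simp add: group_hom_def group_hom_axioms_def inner_aut_hom AutoGroup is_group)
  show ?thesis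
    using c.solvable_imp_solvable_img assms
    unfolding solvable_def Inn_eq_image_inner_aut by blast
qed

lemma (in group) group_Out: "group (Out G)"
  unfolding Out_def by (rule normal.factorgroup_is_group[OF Inn_normal])

lemma (in group) out_proj_hom: "out_proj G \<in> hom (AutoGroup G) (Out G)"
  unfolding Out_def out_proj_def[abs_def] by (rule normal.r_coset_hom_Mod[OF Inn_normal])

lemma (in group) out_proj_eq_one_iff:
  assumes "a \<in> carrier (AutoGroup G)"
  shows "out_proj G a = \<one>\<^bsub>Out G\<^esub> \<longleftrightarrow> a \<in> Inn G"
proof -
  interpret A: group "AutoGroup G" by (rule AutoGroup)
  interpret I: normal "Inn G" "AutoGroup G" by (rule Inn_normal)
  show ?thesis
    unfolding Out_def out_proj_def one_FactGroup
    using A.rcos_self[OF assms I.subgroup_axioms] I.rcos_const[OF A.is_group] by auto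
qed

lemma (in group) kernel_out_proj_comp:
  assumes "f \<in> hom H (AutoGroup G)"
  shows "kernel H (Out G) (out_proj G \<circ> f) = {x \<in> carrier H. f x \<in> Inn G}"
  using assms out_proj_eq_one_iff by (auto simp: kernel_def hom_def)

lemma crossed_hom_restrict_kernel:
  assumes "group N" and "g \<in> carrier G \<rightarrow> carrier N"
    and "\<And>\<sigma> \<tau>. \<sigma> \<in> carrier G \<Longrightarrow> \<tau> \<in> carrier G \<Longrightarrow>
           g (\<sigma> \<otimes>\<^bsub>G\<^esub> \<tau>) = g \<sigma> \<otimes>\<^bsub>N\<^esub> f \<sigma> (g \<tau>)"
  shows "g \<in> hom (G\<lparr>carrier := kernel G (AutoGroup N) f\<rparr>) N"
proof (rule homI)
  fix \<sigma> \<tau> assume "\<sigma> \<in> carrier (G\<lparr>carrier := kernel G (AutoGroup N) f\<rparr>)"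
    and "\<tau> \<in> carrier (G\<lparr>carrier := kernel G (AutoGroup N) f\<rparr>)"
  then have "\<sigma> \<in> carrier G" "\<tau> \<in> carrier G" and "f \<sigma> = (\<lambda>x \<in> carrier N. x)"
    by (auto simp: kernel_def AutoGroup_def BijGroup_def)
  then show "g (\<sigma> \<otimes>\<^bsub>G\<lparr>carrier := kernel G (AutoGroup N) f\<rparr>\<^esub> \<tau>) = g \<sigma> \<otimes>\<^bsub>N\<^esub> g \<tau>"
    using assms(2,3) by auto
qed (use assms(2) in \<open>auto simp: kernel_def\<close>)

lemma solvable_seq_kernel_crossed_hom:
  assumes "group G" and "group N" and "f \<in> hom G (AutoGroup N)"
    and "inj_on g (carrier G)" and "g \<in> carrier G \<rightarrow> carrier N"
    and "\<And>\<sigma> \<tau>. \<sigma> \<in> carrier G \<Longrightarrow> \<tau> \<in> carrier G \<Longrightarrow>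
           g (\<sigma> \<otimes>\<^bsub>G\<^esub> \<tau>) = g \<sigma> \<otimes>\<^bsub>N\<^esub> f \<sigma> (g \<tau>)"
    and "solvable N"
  shows "solvable_seq G (kernel G (AutoGroup N) f)"
proof -
  interpret G: group G by fact
  interpret f: group_hom G "AutoGroup N" f
    using assms(2,3) by (simp add: group_hom_def group_hom_axioms_def group.AutoGroup G.is_group)
  let ?K = "G\<lparr>carrier := kernel G (AutoGroup N) f\<rparr>"
  interpret g: group_hom ?K N g
    using subgroup.subgroup_is_group[OF f.subgroup_kernel G.is_group] assms(2)
          crossed_hom_restrict_kernel[OF assms(2,5,6)]
    by (simp add: group_hom_def group_hom_axioms_def)
  have "inj_on g (carrier ?K)"
    using assms(4) by (auto simp: kernel_def intro: inj_on_subset)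
  then show ?thesis
    using g.inj_hom_imp_solvable assms(7) G.solvable_seq_iff_solvable[OF f.subgroup_kernel]
    by blast
qed

theorem proposition3p2:
  fixes G :: "('g, 'c) monoid_scheme" and N :: "('n, 'd) monoid_scheme"
    and f :: "'g \<Rightarrow> ('n \<Rightarrow> 'n)" and g :: "'g \<Rightarrow> 'n"
  assumes "group G" and "group N"
    and "finite (carrier G)" and "finite (carrier N)"
    and "card (carrier G) = card (carrier N)"
    and "f \<in> hom G (AutoGroup N)"
    and "bij_betw g (carrier G) (carrier N)"
    and "\<And>\<sigma> \<tau>. \<sigma> \<in> carrier G \<Longrightarrow> \<tau> \<in> carrier G \<Longrightarrow>
           g (\<sigma> \<otimes>\<^bsub>G\<^esub> \<tau>) = g \<sigma> \<otimes>\<^bsub>N\<^esub> f \<sigma> (g \<tau>)"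
    and "\<not> solvable G" and "solvable N"
  shows "subgroup ((out_proj N \<circ> f) ` carrier G) (Out N)
       \<and> \<not> solvable ((Out N)\<lparr>carrier := (out_proj N \<circ> f) ` carrier G\<rparr>)"
proof -
  interpret N: group N by fact
  interpret f: group_hom G "AutoGroup N" f
    using assms(1,6) by (simp add: group_hom_def group_hom_axioms_def N.AutoGroup)
  interpret \<phi>: group_hom G "Out N" "out_proj N \<circ> f"
    using assms(1,6) hom_compose[OF assms(6) N.out_proj_hom]
    by (simp add: group_hom_def group_hom_axioms_def N.group_Out)
  have "solvable_seq G (kernel G (AutoGroup N) f)"
    using solvable_seq_kernel_crossed_hom[OF assms(1,2,6) _ _ assms(8,10)] assms(7)
    by (simp add: bij_betw_def bij_betw_imp_funcset)
  then have "solvable_seq G (kernel G (Out N) (out_proj N \<circ> f))"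
    using f.solvable_seq_vimage N.solvable_seq_Inn[OF assms(10)]
    by (simp add: N.kernel_out_proj_comp[OF assms(6)])
  moreover have "{\<sigma> \<in> carrier G. (out_proj N \<circ> f) \<sigma> \<in> (out_proj N \<circ> f) ` carrier G} = carrier G"
    by blast
  ultimately have "\<not> solvable_seq (Out N) ((out_proj N \<circ> f) ` carrier G)"
    using \<phi>.solvable_seq_vimage assms(9) unfolding solvable_def by metis
  then show ?thesis
    using \<phi>.img_is_subgroup \<phi>.H.solvable_seq_iff_solvable by blast
qed

end
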